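(* Let $f(\xi) = i e^{\xi}$ on $U=\{\xi\in\mathbb{C} : |\operatorname{Im}\xi|<\pi/2\}$. Then the domain of the Burgers transform of $f$ is $\Omega_f = \mathbb{R}^2$. Moreover, with $\lambda=\mathcal{B}[f]$, $w_0=y-\lambda x$ and $J(x,y) = 1 + f'(w_0)\,x$, one has $|J(x,y)| \geq 1$ for all $(x,y) \in \mathbb{R}^2$, with equality only at $x = 0$.
   Context: $\mathbb{C}_+$ is the upper half-plane; $f$ maps $U$ into $\mathbb{C}_+$. The Burgers transform $\mathcal{B}[f]\colon\Omega_f\to\mathbb{C}_+$ is defined implicitly by $\mathcal{B}[f](x,y) = f(y - \mathcal{B}[f](x,y)\, x)$, where $\Omega_f \subseteq \mathbb{R}^2$ is the maximal open set on which this equation admits a unique $C^1$ solution with positive imaginary part. (Explicitly, $\mathcal{B}[f](x,y) = W_0(ixe^y)/x$ for $x\ne0$, with $W_0$ the principal branch of the Lambert $W$ function, and $\mathcal{B}[f](0,y)=ie^y$.) *)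

theory Defs
  imports "HOL-Analysis.Analysis"
begin

definition C1_on :: "(real \<times> real) set \<Rightarrow> (real \<times> real \<Rightarrow> complex) \<Rightarrow> bool" where
  "C1_on \<Omega> g \<longleftrightarrow> (\<exists>g' :: real \<times> real \<Rightarrow> ((real \<times> real) \<Rightarrow>\<^sub>L complex).
      (\<forall>p\<in>\<Omega>. (g has_derivative blinfun_apply (g' p)) (at p)) \<and> continuous_on \<Omega> g')"

definition burgers_solution ::
  "(complex \<Rightarrow> complex) \<Rightarrow> complex set \<Rightarrow> (real \<times> real) set \<Rightarrow> (real \<times> real \<Rightarrow> complex) \<Rightarrow> bool" where
  "burgers_solution f U \<Omega> g \<longleftrightarrow>
     C1_on \<Omega> g \<and>
     (\<forall>x y. (x, y) \<in> \<Omega> \<longrightarrow>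
        Im (g (x, y)) > 0 \<and>
        complex_of_real y - g (x, y) * complex_of_real x \<in> U \<and>
        g (x, y) = f (complex_of_real y - g (x, y) * complex_of_real x))"

definition burgers_admissible ::
  "(complex \<Rightarrow> complex) \<Rightarrow> complex set \<Rightarrow> (real \<times> real) set \<Rightarrow> bool" where
  "burgers_admissible f U \<Omega> \<longleftrightarrow> open \<Omega> \<and>
     (\<exists>g. burgers_solution f U \<Omega> g \<and>
          (\<forall>h. burgers_solution f U \<Omega> h \<longrightarrow> (\<forall>p\<in>\<Omega>. h p = g p)))"

text \<open>The domain Omega_f: the union of all admissible open sets (it is the maximal one
whenever a maximal admissible set exists).\<close>
definition burgers_domain :: "(complex \<Rightarrow> complex) \<Rightarrow> complex set \<Rightarrow> (real \<times> real) set" where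
  "burgers_domain f U = \<Union>{\<Omega>. burgers_admissible f U \<Omega>}"

end

theory Submission
  imports Defs
begin

(* Write lambda x = s + i t for a solution lambda of lambda = i exp (y - lambda x). Separating real
   and imaginary parts gives s = t tan t and phi t = x e^y with phi t = t e^(t tan t) / cos t, and
   w0 = y - lambda x lies in U exactly when |t| < pi/2. On (-pi/2, pi/2) the function phi is an
   increasing bijection onto the reals with phi' > 0, so there is exactly one solution at every
   point of R^2, and it is C^1 because the inverse of phi is. Since f' = f, the Jacobian is
   J = 1 + lambda x = 1 + t tan t + i t, whose modulus is at least 1 + t tan t >= 1, with equality
   only if t = 0, that is x = 0. *)

lemma cos_pos_if_abs_less: "\<bar>t\<bar> < pi/2 \<Longrightarrow> 0 < cos t"
  by (intro cos_gt_zero_pi) auto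

lemma mult_tan_nonneg: "\<bar>t\<bar> < pi/2 \<Longrightarrow> 0 \<le> t * tan t"
  using tan_gt_zero[of t] tan_gt_zero[of "-t"]
  by (cases t "0::real" rule: linorder_cases) (auto simp: mult_nonpos_nonpos)

lemma mult_tan_has_real_derivative:
  "cos t \<noteq> 0 \<Longrightarrow> ((\<lambda>t. t * tan t) has_real_derivative tan t + t / (cos t)\<^sup>2) (at t)"
  by (auto intro!: derivative_eq_intros simp: divide_inverse)

lemma i_mult_exp_Complex:
  "\<i> * exp (Complex a (- t)) = of_real (exp a) * Complex (sin t) (cos t)"
  by (simp add: exp_eq_polar cis.ctr complex_eq_iff)

lemma deriv_i_mult_exp: "deriv (\<lambda>\<xi>. \<i> * exp \<xi>) w = \<i> * exp w"
  by (auto intro!: DERIV_imp_deriv derivative_eq_intros)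

lemma cmod_Complex_one_plus:
  assumes "0 \<le> s"
  shows "1 \<le> cmod (Complex (1 + s) t)" and "cmod (Complex (1 + s) t) = 1 \<Longrightarrow> t = 0"
proof -
  have "1 \<le> (1 + s)\<^sup>2" using assms by (intro one_le_power) simp
  then have "1 \<le> (1 + s)\<^sup>2 + t\<^sup>2" by (simp add: add_increasing2)
  then show "1 \<le> cmod (Complex (1 + s) t)" by (simp add: cmod_def)
  show "t = 0" if "cmod (Complex (1 + s) t) = 1"
  proof -
    have "(1 + s)\<^sup>2 + t\<^sup>2 = 1" using that by (simp add: cmod_def)
    with \<open>1 \<le> (1 + s)\<^sup>2\<close> have "t\<^sup>2 \<le> 0" by linarith
    then show ?thesis by simp
  qed
qed

lemma C1_on_if_continuous_partials:
  fixes g gx gy :: "real \<times> real \<Rightarrow> complex"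
  assumes deriv: "\<And>p. p \<in> \<Omega> \<Longrightarrow> (g has_derivative (\<lambda>h. fst h *\<^sub>R gx p + snd h *\<^sub>R gy p)) (at p)"
    and "continuous_on \<Omega> gx" "continuous_on \<Omega> gy"
  shows "C1_on \<Omega> g"
proof -
  define g' where "g' p = Blinfun (\<lambda>h. fst h *\<^sub>R gx p + snd h *\<^sub>R gy p)" for p
  have g': "blinfun_apply (g' p) = (\<lambda>h. fst h *\<^sub>R gx p + snd h *\<^sub>R gy p)" for p
    unfolding g'_def
    by (intro bounded_linear_Blinfun_apply) (auto intro!: bounded_linear_intros)
  have "continuous_on \<Omega> g'"
    unfolding continuous_on_eq_continuous_within
  proof
    fix p assume "p \<in> \<Omega>"
    then have "continuous (at p within \<Omega>) gx" "continuous (at p within \<Omega>) gy"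
      using assms(2,3) by (simp_all add: continuous_on_eq_continuous_within)
    then show "continuous (at p within \<Omega>) g'"
      by (intro continuous_blinfun_componentwiseI1) (auto simp: g' Basis_prod_def)
  qed
  then show ?thesis
    unfolding C1_on_def using deriv g' by metis
qed

definition phi :: "real \<Rightarrow> real" where
  "phi t = t * exp (t * tan t) / cos t"

definition phi' :: "real \<Rightarrow> real" where
  "phi' t = exp (t * tan t) / cos t * (1 + 2 * t * tan t + (t / cos t)\<^sup>2)"

lemma phi_has_real_derivative:
  assumes "\<bar>t\<bar> < pi/2"
  shows "(phi has_real_derivative phi' t) (at t)"
proof -
  have c: "cos t > 0" using cos_pos_if_abs_less[OF assms] .
  have "(phi has_real_derivative
      ((exp (t * tan t) + t * (exp (t * tan t) * (tan t + t * inverse ((cos t)\<^sup>2)))) * cos t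
        - t * exp (t * tan t) * (- sin t)) / (cos t * cos t)) (at t)"
    unfolding phi_def[abs_def] using c by (auto intro!: derivative_eq_intros)
  moreover have "((exp (t * tan t) + t * (exp (t * tan t) * (tan t + t * inverse ((cos t)\<^sup>2))))
      * cos t - t * exp (t * tan t) * (- sin t)) / (cos t * cos t) = phi' t"
    using c by (simp add: phi'_def tan_def field_simps power2_eq_square)
  ultimately show ?thesis by simp
qed

lemma phi'_pos: "\<bar>t\<bar> < pi/2 \<Longrightarrow> 0 < phi' t"
  using cos_pos_if_abs_less[of t] mult_tan_nonneg[of t]
  by (simp add: phi'_def add_pos_nonneg)

lemma isCont_phi': "\<bar>t\<bar> < pi/2 \<Longrightarrow> isCont phi' t"
  using cos_pos_if_abs_less[of t] unfolding phi'_def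
  by (auto intro!: continuous_intros)

lemma phi_strict_mono_on: "strict_mono_on {t. \<bar>t\<bar> < pi/2} phi"
proof (rule strict_mono_onI)
  fix a b assume "a \<in> {t. \<bar>t\<bar> < pi/2}" "b \<in> {t. \<bar>t\<bar> < pi/2}" "a < b"
  then have "\<bar>t\<bar> < pi/2" if "a \<le> t" "t \<le> b" for t
    using that by auto
  then show "phi a < phi b"
    using \<open>a < b\<close> phi_has_real_derivative phi'_pos by (metis DERIV_pos_imp_increasing)
qed

lemma phi_minus: "phi (- t) = - phi t"
  by (simp add: phi_def)

lemma phi_eq_0_iff: "\<bar>t\<bar> < pi/2 \<Longrightarrow> phi t = 0 \<longleftrightarrow> t = 0"
  using cos_pos_if_abs_less[of t] by (auto simp: phi_def)

lemma ex_phi_ge: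
  assumes "0 \<le> c"
  shows "\<exists>t. 0 \<le> t \<and> t < pi/2 \<and> c \<le> phi t"
proof -
  define t where "t = arctan (2 * (c + 1))"
  have t: "0 \<le> t" "t < pi/2" "tan t = 2 * (c + 1)"
    using assms arctan_ubound by (auto simp: t_def tan_arctan)
  have "pi/4 \<le> t"
    unfolding t_def arctan_one[symmetric] arctan_le_iff using assms by simp
  then have t34: "3/4 \<le> t" using pi_gt3 by linarith
  have cos_t: "0 < cos t" "cos t \<le> 1" using cos_pos_if_abs_less[of t] t by auto
  have "c \<le> t * (t * tan t)"
  proof -
    have "3/4 * (3/4) \<le> t * t" using t34 by (intro mult_mono) auto
    then have "9/16 * tan t \<le> t * t * tan t" using t(3) assms by (intro mult_right_mono) auto
    moreover have "c \<le> 9/16 * tan t" using t(3) assms by simp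
    ultimately show ?thesis by (simp add: mult.assoc)
  qed
  also have "\<dots> \<le> t * exp (t * tan t)"
    using exp_ge_add_one_self[of "t * tan t"] t(1) by (intro mult_left_mono) linarith+
  also have "\<dots> \<le> phi t"
    unfolding phi_def using cos_t t by (simp add: divide_simps mult_left_le)
  finally show ?thesis using t by blast
qed

lemma phi_surj: "\<exists>t. \<bar>t\<bar> < pi/2 \<and> phi t = c"
proof -
  have nonneg: "\<exists>t. \<bar>t\<bar> < pi/2 \<and> phi t = c" if c: "0 \<le> c" for c
  proof -
    obtain t1 where t1: "0 \<le> t1" "t1 < pi/2" "c \<le> phi t1"
      using ex_phi_ge[OF c] by blast
    have "\<forall>t. 0 \<le> t \<and> t \<le> t1 \<longrightarrow> isCont phi t"
    proof (intro allI impI)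
      fix t assume "0 \<le> t \<and> t \<le> t1"
      then have "\<bar>t\<bar> < pi/2" using t1 by linarith
      then show "isCont phi t" by (rule phi_has_real_derivative[THEN DERIV_isCont])
    qed
    moreover have "phi 0 \<le> c" using c by (simp add: phi_def)
    ultimately obtain t where "0 \<le> t" "t \<le> t1" "phi t = c"
      using IVT[of phi 0 c t1] t1 by blast
    moreover have "\<bar>t\<bar> < pi/2" using calculation t1 by linarith
    ultimately show ?thesis by blast
  qed
  show ?thesis
  proof (cases "0 \<le> c")
    case True
    then show ?thesis by (rule nonneg)
  next
    case False
    then obtain t where t: "\<bar>t\<bar> < pi/2" "phi t = - c" using nonneg[of "- c"] by auto
    have "\<bar>- t\<bar> < pi/2" "phi (- t) = c" using t by (simp_all add: phi_minus)
    then show ?thesis by blast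
  qed
qed

lemma bij_betw_phi: "bij_betw phi {t. \<bar>t\<bar> < pi/2} UNIV"
  unfolding bij_betw_def
  using strict_mono_on_imp_inj_on[OF phi_strict_mono_on]
  by (metis (mono_tags, lifting) UNIV_eq_I image_iff mem_Collect_eq phi_surj)

definition phi_inv :: "real \<Rightarrow> real" where
  "phi_inv = the_inv_into {t. \<bar>t\<bar> < pi/2} phi"

lemma abs_phi_inv_less: "\<bar>phi_inv c\<bar> < pi/2"
  using the_inv_into_into[of phi "{t. \<bar>t\<bar> < pi/2}" c] bij_betw_phi
  by (auto simp: phi_inv_def bij_betw_def)

lemma phi_phi_inv [simp]: "phi (phi_inv c) = c"
  using f_the_inv_into_f_bij_betw[OF bij_betw_phi] by (simp add: phi_inv_def)

lemma phi_inv_phi: "\<bar>t\<bar> < pi/2 \<Longrightarrow> phi_inv (phi t) = t"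
  using the_inv_into_f_f[of phi "{t. \<bar>t\<bar> < pi/2}" t] bij_betw_phi
  by (simp add: phi_inv_def bij_betw_def)

lemma isCont_phi_inv: "isCont phi_inv c"
proof -
  define t where "t = phi_inv c"
  define d where "d = (pi/2 - \<bar>t\<bar>) / 2"
  have "0 < d" using abs_phi_inv_less[of c] by (simp add: d_def t_def)
  have near: "\<bar>z\<bar> < pi/2" if "\<bar>z - t\<bar> \<le> d" for z
    using that abs_phi_inv_less[of c] abs_triangle_ineq[of "z - t" t]
    by (simp add: d_def t_def)
  have "isCont phi_inv (phi t)"
    by (rule isCont_inverse_function[OF \<open>0 < d\<close>])
      (auto intro: phi_inv_phi DERIV_isCont phi_has_real_derivative near)
  then show ?thesis by (simp add: t_def)
qed

lemma phi_inv_has_real_derivative: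
  "(phi_inv has_real_derivative inverse (phi' (phi_inv c))) (at c)"
  using abs_phi_inv_less[of c] phi'_pos[of "phi_inv c"]
  by (intro DERIV_inverse_function[where a = "c - 1" and b = "c + 1"])
    (auto intro: phi_has_real_derivative isCont_phi_inv)

definition burgers_angle :: "real \<times> real \<Rightarrow> real" where
  "burgers_angle p = phi_inv (fst p * exp (snd p))"

definition burgers_exp :: "real \<times> real \<Rightarrow> complex" where
  "burgers_exp p = \<i> * exp (of_real (snd p - burgers_angle p * tan (burgers_angle p))
                              - \<i> * of_real (burgers_angle p))"

lemma abs_burgers_angle_less: "\<bar>burgers_angle p\<bar> < pi/2"
  unfolding burgers_angle_def by (rule abs_phi_inv_less)

lemma phi_burgers_angle: "phi (burgers_angle (x, y)) = x * exp y"
  by (simp add: burgers_angle_def)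

lemma burgers_angle_eq_0_iff: "burgers_angle (x, y) = 0 \<longleftrightarrow> x = 0"
proof -
  have "phi (burgers_angle (x, y)) = 0 \<longleftrightarrow> x = 0" by (simp add: phi_burgers_angle)
  then show ?thesis using phi_eq_0_iff[OF abs_burgers_angle_less] by simp
qed

lemma burgers_exp_Complex:
  fixes x y :: real
  defines "t \<equiv> burgers_angle (x, y)"
  shows "burgers_exp (x, y) = \<i> * exp (Complex (y - t * tan t) (- t))"
proof -
  have "of_real (y - t * tan t) - \<i> * of_real t = Complex (y - t * tan t) (- t)"
    by (simp add: complex_eq_iff)
  then show ?thesis by (simp only: burgers_exp_def fst_conv snd_conv t_def)
qed

lemma burgers_exp_polar:
  fixes x y :: real
  defines "t \<equiv> burgers_angle (x, y)"
  shows "burgers_exp (x, y) = of_real (exp (y - t * tan t)) * Complex (sin t) (cos t)"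
  unfolding burgers_exp_Complex t_def i_mult_exp_Complex ..

lemma Im_burgers_exp_pos: "0 < Im (burgers_exp p)"
proof -
  obtain x y where p: "p = (x, y)" by fastforce
  show ?thesis
    using cos_pos_if_abs_less[OF abs_burgers_angle_less] by (simp add: p burgers_exp_polar)
qed

lemma burgers_exp_mult:
  fixes x y :: real
  defines "t \<equiv> burgers_angle (x, y)"
  shows "burgers_exp (x, y) * of_real x = Complex (t * tan t) t"
proof -
  have cos_t: "0 < cos t" using abs_burgers_angle_less cos_pos_if_abs_less t_def by blast
  have "t * exp (t * tan t) / cos t = x * exp y"
    using phi_burgers_angle[of x y] by (simp add: t_def phi_def)
  then have scale: "x * exp (y - t * tan t) = t / cos t"
    using cos_t by (simp add: exp_diff field_simps)
  have "burgers_exp (x, y) * of_real x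
      = of_real (x * exp (y - t * tan t)) * Complex (sin t) (cos t)"
    by (simp add: burgers_exp_polar t_def complex_eq_iff)
  also have "\<dots> = Complex (t * tan t) t"
    unfolding scale using cos_t by (simp add: complex_eq_iff tan_def)
  finally show ?thesis .
qed

lemma burgers_exp_arg:
  fixes x y :: real
  defines "t \<equiv> burgers_angle (x, y)"
  shows "of_real y - burgers_exp (x, y) * of_real x = Complex (y - t * tan t) (- t)"
  by (simp add: burgers_exp_mult t_def complex_eq_iff)

lemma burgers_exp_solves:
  "burgers_exp (x, y) = \<i> * exp (of_real y - burgers_exp (x, y) * of_real x)"
  unfolding burgers_exp_arg by (rule burgers_exp_Complex)

lemma abs_Im_burgers_exp_arg_less: "\<bar>Im (of_real y - burgers_exp (x, y) * of_real x)\<bar> < pi/2"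
  using abs_burgers_angle_less by (simp add: burgers_exp_arg)

lemma burgers_exp_unique:
  assumes eq: "l = \<i> * exp (of_real y - l * of_real x)"
    and bound: "\<bar>Im (of_real y - l * of_real x)\<bar> < pi/2"
  shows "l = burgers_exp (x, y)"
proof -
  define s t where "s = Re l * x" and "t = Im l * x"
  have arg: "of_real y - l * of_real x = Complex (y - s) (- t)"
    by (simp add: complex_eq_iff s_def t_def)
  have t: "\<bar>t\<bar> < pi/2" using bound by (simp add: arg)
  have cos_t: "0 < cos t" using cos_pos_if_abs_less[OF t] .
  define E where "E = exp (y - s)"
  have "l = of_real E * Complex (sin t) (cos t)"
    using eq unfolding arg i_mult_exp_Complex E_def .
  then have Re_l: "Re l = E * sin t" and Im_l: "Im l = E * cos t"
    by simp_all
  have "t = Im l * x" by (simp add: t_def)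
  also have "\<dots> = x * E * cos t" by (simp add: Im_l mult_ac)
  finally have t_cos: "t / cos t = x * E"
    using cos_t by (metis nonzero_mult_div_cancel_right less_irrefl)
  have "s = Re l * x" by (simp add: s_def)
  also have "\<dots> = t / cos t * sin t" by (simp add: Re_l t_cos mult_ac)
  finally have s: "s = t * tan t"
    by (simp add: tan_def)
  have "phi t = x * E * exp s"
    by (simp add: phi_def s[symmetric] t_cos[symmetric])
  then have "phi t = x * exp y"
    by (simp add: E_def mult.assoc exp_diff)
  then have t_angle: "t = burgers_angle (x, y)"
    using phi_inv_phi[OF t] by (simp add: burgers_angle_def)
  from eq have "l = \<i> * exp (Complex (y - t * tan t) (- t))"
    unfolding arg s .
  also have "\<dots> = burgers_exp (x, y)"
    unfolding t_angle burgers_exp_Complex ..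
  finally show ?thesis .
qed

lemma burgers_angle_has_derivative:
  "(burgers_angle has_derivative
      (\<lambda>h. (fst h + fst p * snd h) * (exp (snd p) / phi' (burgers_angle p)))) (at p)"
proof -
  have "((\<lambda>p. fst p * exp (snd p)) has_derivative
      (\<lambda>h. fst h * exp (snd p) + fst p * (snd h * exp (snd p)))) (at p)"
    by (auto intro!: derivative_eq_intros)
  from DERIV_compose_FDERIV[OF phi_inv_has_real_derivative this]
  show ?thesis
    unfolding burgers_angle_def[abs_def]
    by (rule has_derivative_eq_rhs) (simp add: fun_eq_iff field_simps)
qed

lemma isCont_burgers_angle: "isCont burgers_angle p"
  using burgers_angle_has_derivative by (rule has_derivative_continuous)

(* With lambda = burgers_exp, the differential of lambda x is burgers_kappa * (dx + x dy). *)
definition burgers_kappa :: "real \<times> real \<Rightarrow> complex" where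
  "burgers_kappa p =
     (let t = burgers_angle p
      in (of_real (tan t + t / (cos t)\<^sup>2) + \<i>) * of_real (exp (snd p) / phi' t))"

lemma burgers_exp_has_derivative:
  "(burgers_exp has_derivative
      (\<lambda>h. fst h *\<^sub>R (- burgers_exp p * burgers_kappa p)
         + snd h *\<^sub>R (burgers_exp p * (1 - of_real (fst p) * burgers_kappa p)))) (at p)"
proof -
  define T where "T = burgers_angle"
  define dT where "dT p = exp (snd p) / phi' (T p)" for p
  have cos_T: "cos (T p) \<noteq> 0"
    using cos_pos_if_abs_less[OF abs_burgers_angle_less, of p] by (simp add: T_def)
  have T': "(T has_derivative (\<lambda>h. (fst h + fst p * snd h) * dT p)) (at p)"
    unfolding T_def dT_def by (rule burgers_angle_has_derivative)
  have "((\<lambda>p. of_real (snd p - T p * tan (T p)) - \<i> * of_real (T p)) has_derivative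
      (\<lambda>h. of_real (snd h - (fst h + fst p * snd h) * dT p * (tan (T p) + T p / (cos (T p))\<^sup>2))
           - \<i> * of_real ((fst h + fst p * snd h) * dT p))) (at p)"
    by (intro derivative_intros DERIV_compose_FDERIV[OF mult_tan_has_real_derivative[OF cos_T] T'] T')
  from has_derivative_mult_right[OF has_derivative_compose[OF this
        has_field_derivative_imp_has_derivative[OF DERIV_exp]], of \<i>]
  have deriv: "(burgers_exp has_derivative (\<lambda>h. burgers_exp p *
      (of_real (snd h - (fst h + fst p * snd h) * dT p * (tan (T p) + T p / (cos (T p))\<^sup>2))
       - \<i> * of_real ((fst h + fst p * snd h) * dT p)))) (at p)"
    by (simp add: burgers_exp_def[abs_def] T_def mult.assoc)
  have partials: "G * (of_real (b - (a + x * b) * d * c) - \<i> * of_real ((a + x * b) * d))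
      = a *\<^sub>R (- G * ((of_real c + \<i>) * of_real d))
        + b *\<^sub>R (G * (1 - of_real x * ((of_real c + \<i>) * of_real d)))"
    for G :: complex and a b x c d :: real
    by (simp add: scaleR_conv_of_real algebra_simps)
  show ?thesis
    using deriv unfolding partials unfolding burgers_kappa_def Let_def T_def dT_def .
qed

lemma isCont_burgers_kappa: "isCont burgers_kappa p"
proof -
  have abs_less: "\<bar>burgers_angle p\<bar> < pi/2" by (rule abs_burgers_angle_less)
  have "isCont (\<lambda>q. phi' (burgers_angle q)) p"
    by (rule isCont_o2[OF isCont_burgers_angle isCont_phi'[OF abs_less]])
  moreover have "isCont (\<lambda>q. tan (burgers_angle q)) p"
    using cos_pos_if_abs_less[OF abs_less]
    by (intro isCont_o2[OF isCont_burgers_angle isCont_tan]) simp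
  moreover have "phi' (burgers_angle p) \<noteq> 0"
    using phi'_pos[OF abs_less] by simp
  ultimately show ?thesis
    unfolding burgers_kappa_def Let_def
    using cos_pos_if_abs_less[OF abs_less] isCont_burgers_angle[of p]
    by (auto intro!: continuous_intros)
qed

lemma C1_on_burgers_exp: "C1_on UNIV burgers_exp"
proof (rule C1_on_if_continuous_partials[OF burgers_exp_has_derivative])
  have "continuous_on UNIV burgers_kappa"
    by (intro continuous_at_imp_continuous_on ballI isCont_burgers_kappa)
  moreover have "continuous_on UNIV burgers_exp"
    by (intro continuous_at_imp_continuous_on ballI
        has_derivative_continuous[OF burgers_exp_has_derivative])
  ultimately show "continuous_on UNIV (\<lambda>p. - burgers_exp p * burgers_kappa p)"
    and "continuous_on UNIV (\<lambda>p. burgers_exp p * (1 - of_real (fst p) * burgers_kappa p))"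
    by (auto intro!: continuous_intros)
qed

lemma cmod_one_plus_burgers_exp_mult:
  "1 \<le> cmod (1 + burgers_exp (x, y) * of_real x)"
  "cmod (1 + burgers_exp (x, y) * of_real x) = 1 \<Longrightarrow> x = 0"
proof -
  define t where "t = burgers_angle (x, y)"
  have J: "1 + burgers_exp (x, y) * of_real x = Complex (1 + t * tan t) t"
    by (simp add: burgers_exp_mult t_def complex_eq_iff)
  have "0 \<le> t * tan t"
    unfolding t_def by (rule mult_tan_nonneg[OF abs_burgers_angle_less])
  from cmod_Complex_one_plus[OF this, of t]
  show "1 \<le> cmod (1 + burgers_exp (x, y) * of_real x)"
    and "cmod (1 + burgers_exp (x, y) * of_real x) = 1 \<Longrightarrow> x = 0"
    unfolding J by (auto simp: t_def burgers_angle_eq_0_iff)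
qed

theorem theorem10p7:
  fixes f :: "complex \<Rightarrow> complex" and U :: "complex set"
  assumes f_def: "f = (\<lambda>\<xi>. \<i> * exp \<xi>)"
    and U_def: "U = {\<xi>. \<bar>Im \<xi>\<bar> < pi / 2}"
  shows "burgers_admissible f U UNIV \<and> burgers_domain f U = UNIV \<and>
    (\<forall>B. burgers_solution f U UNIV B \<longrightarrow>
       (\<forall>x y. let w0 = complex_of_real y - B (x, y) * complex_of_real x;
                  J = 1 + deriv f w0 * complex_of_real x
              in cmod J \<ge> 1 \<and> (cmod J = 1 \<longrightarrow> x = 0)))"
proof -
  have solution: "burgers_solution f U UNIV burgers_exp"
    unfolding burgers_solution_def f_def U_def
    using C1_on_burgers_exp Im_burgers_exp_pos abs_Im_burgers_exp_arg_less burgers_exp_solves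
    by blast
  have unique: "B (x, y) = burgers_exp (x, y)" if "burgers_solution f U UNIV B" for B x y
    using that burgers_exp_unique unfolding burgers_solution_def f_def U_def by blast
  have admissible: "burgers_admissible f U UNIV"
    unfolding burgers_admissible_def using solution unique by auto
  have "cmod J \<ge> 1 \<and> (cmod J = 1 \<longrightarrow> x = 0)"
    if "burgers_solution f U UNIV B"
      and "J = 1 + deriv f (of_real y - B (x, y) * of_real x) * of_real x" for B x y J
  proof -
    have "J = 1 + burgers_exp (x, y) * of_real x"
      unfolding that(2) unique[OF that(1)] f_def deriv_i_mult_exp burgers_exp_solves[symmetric] ..
    then show ?thesis using cmod_one_plus_burgers_exp_mult by simp
  qed
  with admissible show ?thesis
    unfolding burgers_domain_def by (auto simp: Let_def)
qed

end
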